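(* Let $\omega_1(n),\omega_2(n)\to+\infty$. If \[\frac{\log(n)+\log(\log(n))+\omega_1(n)}{n}<p<1-\frac{\log(n)+\log(\log(n))+\omega_2(n)}{n},\] then a.a.s. $\Gamma\in G(n,p)$ has no domination pairs.
   Context: $G(n,p)$ is the Erdős–Rényi random graph on $n$ vertices with each edge present independently with probability $p=p(n)$; a.a.s. means with probability tending to $1$; $\log$ is natural logarithm. For distinct vertices $a,b$, $(a,b)$ is a domination pair if every vertex adjacent to $b$ is adjacent to or equal to $a$. *)

theory Defs
  imports Complex_Main
begin

text \<open>Vertex set of G(n,p) is {0..<n}; a graph is a set of edges, each edge a 2-element set.\<close>

definition all_edges :: "nat \<Rightarrow> nat set set" where
  "all_edges n = {{u, v} | u v. u < n \<and> v < n \<and> u \<noteq> v}"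

definition gnp_weight :: "nat \<Rightarrow> real \<Rightarrow> nat set set \<Rightarrow> real" where
  "gnp_weight n p E = p ^ card E * (1 - p) ^ (card (all_edges n) - card E)"

definition gnp_prob :: "nat \<Rightarrow> real \<Rightarrow> (nat set set \<Rightarrow> bool) \<Rightarrow> real" where
  "gnp_prob n p P = (\<Sum>E\<in>{E. E \<subseteq> all_edges n \<and> P E}. gnp_weight n p E)"

definition domination_pair :: "nat \<Rightarrow> nat set set \<Rightarrow> nat \<Rightarrow> nat \<Rightarrow> bool" where
  "domination_pair n E a b \<longleftrightarrow> a < n \<and> b < n \<and> a \<noteq> b \<and>
     (\<forall>v<n. {v, b} \<in> E \<longrightarrow> ({v, a} \<in> E \<or> v = a))"

definition has_domination_pair :: "nat \<Rightarrow> nat set set \<Rightarrow> bool" where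
  "has_domination_pair n E \<longleftrightarrow> (\<exists>a b. domination_pair n E a b)"

end

theory Submission
  imports Defs "HOL-Real_Asymp.Real_Asymp"
begin

text \<open>Complementing the graph maps G(n,p) to G(n,1-p) and a domination pair (a,b) to (b,a), so
  we may assume p \<le> 1/2 and n p \<ge> log n + log log n + \<omega>(n). If (a,b) is a domination pair,
  let M be the set of neighbours of b other than a; all of them are neighbours of a. Either b
  has degree at most one, which has probability O(n (1-p)^(n-1) + n^2 p (1-p)^(n-2)) = O(e^-\<omega>),
  or the edges at a and b form one of a few explicit patterns determined by M. Summing their
  probabilities over M gives, per pair, (1-p+p^2)^(n-2) - (1-p)^(n-2) - (n-2) p^2 (1-p)^(n-2),
  which is of second order in (n-2) p^2. Multiplied by n^2 this is O((log n)^3/n) when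
  n p = O(log n), while for larger p everything is dominated by n^2 (1-p/2)^(n-2) = O(1/n).\<close>

section \<open>Edge patterns in G(n,p)\<close>

lemma finite_all_edges: "finite (all_edges n)"
proof -
  have "all_edges n \<subseteq> (\<lambda>(u, v). {u, v}) ` ({..<n} \<times> {..<n})"
    unfolding all_edges_def by auto
  then show ?thesis by (rule finite_subset) auto
qed

lemma doubleton_in_all_edges_iff: "{u, v} \<in> all_edges n \<longleftrightarrow> u < n \<and> v < n \<and> u \<noteq> v"
  unfolding all_edges_def by (auto simp: doubleton_eq_iff)

lemma sum_Pow_card_power:
  fixes x y :: "'a :: comm_semiring_1"
  assumes "finite R"
  shows "(\<Sum>F\<in>Pow R. x ^ card F * y ^ (card R - card F)) = (x + y) ^ card R"
proof -
  have "(x + y) ^ card R = (\<Prod>_\<in>R. x + y)" by simp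
  also have "\<dots> = (\<Sum>F\<in>Pow R. (\<Prod>_\<in>F. x) * (\<Prod>_\<in>R - F. y))"
    by (rule prod_add[OF assms])
  also have "\<dots> = (\<Sum>F\<in>Pow R. x ^ card F * y ^ (card R - card F))"
    by (rule sum.cong) (use assms in \<open>auto simp: card_Diff_subset finite_subset\<close>)
  finally show ?thesis ..
qed

definition edge_pattern :: "nat set set \<Rightarrow> nat set set \<Rightarrow> nat set set \<Rightarrow> bool" where
  "edge_pattern S T E \<longleftrightarrow> S \<subseteq> E \<and> E \<inter> T = {}"

lemma gnp_prob_edge_pattern:
  assumes "S \<subseteq> all_edges n" "T \<subseteq> all_edges n" "S \<inter> T = {}"
  shows "gnp_prob n p (edge_pattern S T) = p ^ card S * (1 - p) ^ card T"
proof -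
  define A where "A = all_edges n"
  define R where "R = A - S - T"
  have fin: "finite A" "finite S" "finite T" "finite R"
    using assms finite_all_edges[of n] unfolding A_def R_def by (auto intro: finite_subset)
  have card_A: "card A = card S + card T + card R"
  proof -
    have "A = S \<union> T \<union> R" "S \<inter> T = {}" "(S \<union> T) \<inter> R = {}"
      using assms unfolding A_def R_def by auto
    then show ?thesis using fin by (simp add: card_Un_disjoint)
  qed
  have events: "{E. E \<subseteq> A \<and> edge_pattern S T E} = (\<union>) S ` Pow R"
    unfolding edge_pattern_def R_def using assms unfolding A_def
    by (auto intro!: image_eqI[where x="_ - S"])
  have inj: "inj_on ((\<union>) S) (Pow R)"
    unfolding R_def inj_on_def by blast
  have weight: "gnp_weight n p (S \<union> F) =
      p ^ card S * (1 - p) ^ card T * (p ^ card F * (1 - p) ^ (card R - card F))"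
    if "F \<in> Pow R" for F
  proof -
    have "finite F" "S \<inter> F = {}" "card F \<le> card R"
      using that fin by (auto simp: R_def card_mono finite_subset)
    then have "card (S \<union> F) = card S + card F"
      "card S + card T + card R - (card S + card F) = card T + (card R - card F)"
      using fin by (simp_all add: card_Un_disjoint)
    then show ?thesis
      unfolding gnp_weight_def A_def[symmetric] card_A by (simp add: power_add)
  qed
  have "gnp_prob n p (edge_pattern S T) = (\<Sum>F\<in>Pow R. gnp_weight n p (S \<union> F))"
    unfolding gnp_prob_def A_def[symmetric] events by (simp add: sum.reindex[OF inj])
  also have "\<dots> = p ^ card S * (1 - p) ^ card T * (p + (1 - p)) ^ card R"
    by (simp add: weight sum_distrib_left[symmetric] sum_Pow_card_power fin)
  finally show ?thesis by simp
qed

lemma finite_gnp_event: "finite {E. E \<subseteq> all_edges n \<and> P E}"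
  using finite_all_edges by (rule rev_finite_subset[OF finite_Pow_iff[THEN iffD2]]) auto

lemma gnp_prob_nonneg: "0 \<le> p \<Longrightarrow> p \<le> 1 \<Longrightarrow> 0 \<le> gnp_prob n p P"
  unfolding gnp_prob_def gnp_weight_def by (intro sum_nonneg) simp

lemma gnp_prob_mono:
  assumes "\<And>E. E \<subseteq> all_edges n \<Longrightarrow> P E \<Longrightarrow> Q E" "0 \<le> p" "p \<le> 1"
  shows "gnp_prob n p P \<le> gnp_prob n p Q"
  unfolding gnp_prob_def
  by (rule sum_mono2[OF finite_gnp_event]) (use assms in \<open>auto simp: gnp_weight_def\<close>)

lemma gnp_prob_disj_le:
  assumes "0 \<le> p" "p \<le> 1"
  shows "gnp_prob n p (\<lambda>E. P E \<or> Q E) \<le> gnp_prob n p P + gnp_prob n p Q"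
proof -
  let ?ev = "\<lambda>P. {E. E \<subseteq> all_edges n \<and> P E}"
  have "?ev (\<lambda>E. P E \<or> Q E) = ?ev P \<union> ?ev Q" by auto
  then have "gnp_prob n p (\<lambda>E. P E \<or> Q E) = gnp_prob n p P + gnp_prob n p Q
      - (\<Sum>E\<in>?ev P \<inter> ?ev Q. gnp_weight n p E)"
    unfolding gnp_prob_def by (simp add: sum_Un finite_gnp_event)
  moreover have "0 \<le> (\<Sum>E\<in>?ev P \<inter> ?ev Q. gnp_weight n p E)"
    using assms by (intro sum_nonneg) (simp add: gnp_weight_def)
  ultimately show ?thesis by linarith
qed

lemma gnp_prob_Bex_le:
  assumes "finite I" "0 \<le> p" "p \<le> 1"
  shows "gnp_prob n p (\<lambda>E. \<exists>i\<in>I. Q i E) \<le> (\<Sum>i\<in>I. gnp_prob n p (Q i))"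
  using assms(1)
proof (induction I rule: finite_induct)
  case empty
  then show ?case by (simp add: gnp_prob_def)
next
  case (insert j I)
  have "gnp_prob n p (\<lambda>E. \<exists>i\<in>insert j I. Q i E) \<le>
      gnp_prob n p (Q j) + gnp_prob n p (\<lambda>E. \<exists>i\<in>I. Q i E)"
    using gnp_prob_disj_le[OF assms(2,3)] by simp
  then show ?case using insert by simp
qed

lemma gnp_prob_True: "gnp_prob n p (\<lambda>E. True) = 1"
proof -
  have "edge_pattern {} {} = (\<lambda>E. True)" unfolding edge_pattern_def by auto
  moreover have "gnp_prob n p (edge_pattern {} {}) = 1" by (subst gnp_prob_edge_pattern) auto
  ultimately show ?thesis by simp
qed

lemma gnp_prob_not: "gnp_prob n p (\<lambda>E. \<not> P E) = 1 - gnp_prob n p P"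
proof -
  have split: "{E. E \<subseteq> all_edges n \<and> True} =
      {E. E \<subseteq> all_edges n \<and> \<not> P E} \<union> {E. E \<subseteq> all_edges n \<and> P E}" by auto
  have "gnp_prob n p (\<lambda>E. True) = gnp_prob n p (\<lambda>E. \<not> P E) + gnp_prob n p P"
    unfolding gnp_prob_def split by (rule sum.union_disjoint[OF finite_gnp_event finite_gnp_event]) auto
  then show ?thesis using gnp_prob_True by simp
qed

section \<open>Complementation\<close>

lemma gnp_prob_one_minus:
  assumes "\<And>E. E \<subseteq> all_edges n \<Longrightarrow> P (all_edges n - E) \<longleftrightarrow> P E"
  shows "gnp_prob n (1 - p) P = gnp_prob n p P"
proof -
  define A where "A = all_edges n"
  have events: "{E. E \<subseteq> A \<and> P E} = (\<lambda>E. A - E) ` {E. E \<subseteq> A \<and> P E}"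
    using assms unfolding A_def by (auto intro!: image_eqI[where x="all_edges n - _"])
  have inj: "inj_on (\<lambda>E. A - E) {E. E \<subseteq> A \<and> P E}"
    unfolding inj_on_def by blast
  have weight: "gnp_weight n (1 - p) (A - E) = gnp_weight n p E" if "E \<subseteq> A" for E
  proof -
    have "card (A - E) = card A - card E" "card E \<le> card A"
      using that finite_all_edges[of n] unfolding A_def
      by (auto simp: card_Diff_subset finite_subset card_mono)
    then show ?thesis unfolding gnp_weight_def A_def[symmetric] by (simp add: mult.commute)
  qed
  have "gnp_prob n (1 - p) P = (\<Sum>E\<in>{E. E \<subseteq> A \<and> P E}. gnp_weight n (1 - p) (A - E))"
    unfolding gnp_prob_def A_def[symmetric] by (subst events) (simp add: sum.reindex[OF inj])
  also have "\<dots> = gnp_prob n p P"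
    unfolding gnp_prob_def A_def[symmetric] by (rule sum.cong) (auto simp: weight)
  finally show ?thesis .
qed

lemma domination_pair_complement:
  assumes "domination_pair n E a b"
  shows "domination_pair n (all_edges n - E) b a"
proof -
  have ab: "a < n" "b < n" "a \<noteq> b"
    and dom: "\<And>v. v < n \<Longrightarrow> {v, b} \<in> E \<Longrightarrow> {v, a} \<in> E \<or> v = a"
    using assms unfolding domination_pair_def by auto
  have "{v, b} \<in> all_edges n - E \<or> v = b" if v: "v < n" "{v, a} \<in> all_edges n - E" for v
  proof (cases "v = b")
    case False
    then have "v \<noteq> a" "{v, b} \<notin> E" using v dom[of v] by (auto simp: doubleton_in_all_edges_iff)
    then show ?thesis using False v ab by (simp add: doubleton_in_all_edges_iff)
  qed simp
  then show ?thesis using ab unfolding domination_pair_def by auto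
qed

lemma has_domination_pair_complement:
  assumes "E \<subseteq> all_edges n"
  shows "has_domination_pair n (all_edges n - E) \<longleftrightarrow> has_domination_pair n E"
proof -
  have "all_edges n - (all_edges n - E) = E" using assms by auto
  then show ?thesis unfolding has_domination_pair_def
    using domination_pair_complement[of n E] domination_pair_complement[of n "all_edges n - E"]
    by fastforce
qed

section \<open>Domination pairs as edge patterns\<close>

definition distinct_pairs :: "nat \<Rightarrow> (nat \<times> nat) set" where
  "distinct_pairs n = {(a, b). a < n \<and> b < n \<and> a \<noteq> b}"

definition edges_at :: "nat \<Rightarrow> nat \<Rightarrow> nat set set" where
  "edges_at n b = (\<lambda>v. {b, v}) ` ({..<n} - {b})"

definition others :: "nat \<Rightarrow> nat \<Rightarrow> nat \<Rightarrow> nat set" where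
  "others n a b = {..<n} - {a, b}"

text \<open>For a domination pair (a,b), M below is the set of neighbours of b other than a: the
  edges from M to a and to b are present, the other edges at b are absent.\<close>

definition shared_edges :: "nat \<Rightarrow> nat \<Rightarrow> nat set \<Rightarrow> nat set set" where
  "shared_edges a b M = (\<lambda>v. {a, v}) ` M \<union> (\<lambda>v. {b, v}) ` M"

definition missing_edges :: "nat \<Rightarrow> nat \<Rightarrow> nat \<Rightarrow> nat set \<Rightarrow> nat set set" where
  "missing_edges n a b M = (\<lambda>v. {b, v}) ` (others n a b - M)"

definition dominated_adjacent :: "nat \<Rightarrow> nat \<Rightarrow> nat \<Rightarrow> nat set \<Rightarrow> nat set set \<Rightarrow> bool" where
  "dominated_adjacent n a b M =
     edge_pattern (insert {a, b} (shared_edges a b M)) (missing_edges n a b M)"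

definition dominated_nonadjacent :: "nat \<Rightarrow> nat \<Rightarrow> nat \<Rightarrow> nat set \<Rightarrow> nat set set \<Rightarrow> bool" where
  "dominated_nonadjacent n a b M =
     edge_pattern (shared_edges a b M) (insert {a, b} (missing_edges n a b M))"

text \<open>In the first two cases b has degree at most one. They replace the non-adjacent patterns
  with |M| \<le> 1, whose probabilities summed over all pairs (a,b) do not tend to 0.\<close>

lemma domination_pair_cases:
  assumes "domination_pair n E a b"
  obtains "edge_pattern {} (edges_at n b) E"
  | c where "(b, c) \<in> distinct_pairs n" "edge_pattern {{b, c}} (edges_at n b - {{b, c}}) E"
  | M where "M \<subseteq> others n a b" "M \<noteq> {}" "dominated_adjacent n a b M E"
  | M where "M \<subseteq> others n a b" "2 \<le> card M" "dominated_nonadjacent n a b M E"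
proof -
  have ab: "a < n" "b < n" "a \<noteq> b"
    and dom: "\<And>v. v < n \<Longrightarrow> {v, b} \<in> E \<Longrightarrow> {v, a} \<in> E \<or> v = a"
    using assms unfolding domination_pair_def by auto
  define M where "M = {v \<in> others n a b. {b, v} \<in> E}"
  have M: "M \<subseteq> others n a b" "finite M" unfolding M_def others_def by auto
  have shared: "shared_edges a b M \<subseteq> E"
    using dom unfolding shared_edges_def M_def others_def by (auto simp: insert_commute)
  have missing: "E \<inter> missing_edges n a b M = {}"
    unfolding missing_edges_def M_def by auto
  consider "M = {}" | c where "M = {c}" | "2 \<le> card M"
  proof -
    have "card M = 0 \<or> card M = 1 \<or> 2 \<le> card M" by arith
    then show thesis using that M(2) by (auto simp: card_Suc_eq)
  qed
  then show thesis
  proof cases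
    case 1
    show thesis
    proof (cases "{a, b} \<in> E")
      case True
      have "edge_pattern {{b, a}} (edges_at n b - {{b, a}}) E"
        using True missing unfolding edge_pattern_def edges_at_def missing_edges_def 1 others_def
        by (auto simp: insert_commute)
      then show thesis using that(2)[of a] ab by (simp add: distinct_pairs_def)
    next
      case False
      have "edge_pattern {} (edges_at n b) E"
        using False missing unfolding edge_pattern_def edges_at_def missing_edges_def 1 others_def
        by (auto simp: insert_commute)
      then show thesis using that(1) by simp
    qed
  next
    case (2 c)
    show thesis
    proof (cases "{a, b} \<in> E")
      case True
      then show thesis using that(3) M shared missing 2
        unfolding dominated_adjacent_def edge_pattern_def by auto
    next
      case False
      have c: "c \<in> others n a b" "{b, c} \<in> E" using 2 unfolding M_def by auto
      have "edge_pattern {{b, c}} (edges_at n b - {{b, c}}) E"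
        using False missing c unfolding edge_pattern_def edges_at_def missing_edges_def 2 others_def
        by (auto simp: insert_commute)
      then show thesis using that(2) c ab by (auto simp: distinct_pairs_def others_def)
    qed
  next
    case 3
    then have "M \<noteq> {}" by auto
    show thesis
    proof (cases "{a, b} \<in> E")
      case True
      then show thesis using that(3) M shared missing \<open>M \<noteq> {}\<close>
        unfolding dominated_adjacent_def edge_pattern_def by auto
    next
      case False
      then show thesis using that(4) M shared missing 3
        unfolding dominated_nonadjacent_def edge_pattern_def by auto
    qed
  qed
qed

lemma card_doubleton_image: "x \<notin> M \<Longrightarrow> card ((\<lambda>v. {x, v}) ` M) = card M"
  by (rule card_image) (auto simp: inj_on_def doubleton_eq_iff)

lemma card_others: "(a, b) \<in> distinct_pairs n \<Longrightarrow> card (others n a b) = n - 2"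
  unfolding distinct_pairs_def others_def by (subst card_Diff_subset) auto

lemma gnp_prob_isolated:
  assumes "b < n"
  shows "gnp_prob n p (edge_pattern {} (edges_at n b)) = (1 - p) ^ (n - 1)"
proof -
  have "card (edges_at n b) = n - 1"
    unfolding edges_at_def using assms by (subst card_doubleton_image) auto
  moreover have "edges_at n b \<subseteq> all_edges n"
    using assms unfolding edges_at_def by (auto simp: doubleton_in_all_edges_iff)
  ultimately show ?thesis by (subst gnp_prob_edge_pattern) auto
qed

lemma gnp_prob_pendant:
  assumes "(b, c) \<in> distinct_pairs n"
  shows "gnp_prob n p (edge_pattern {{b, c}} (edges_at n b - {{b, c}})) = p * (1 - p) ^ (n - 2)"
proof -
  have bc: "b < n" "c < n" "b \<noteq> c" using assms by (auto simp: distinct_pairs_def)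
  have "edges_at n b - {{b, c}} = (\<lambda>v. {b, v}) ` ({..<n} - {b, c})"
    unfolding edges_at_def by (auto simp: doubleton_eq_iff)
  then have "card (edges_at n b - {{b, c}}) = n - 2"
    using bc by (simp add: card_doubleton_image card_Diff_subset)
  moreover have "edges_at n b \<subseteq> all_edges n"
    using bc unfolding edges_at_def by (auto simp: doubleton_in_all_edges_iff)
  ultimately show ?thesis using bc by (subst gnp_prob_edge_pattern) (auto simp: doubleton_in_all_edges_iff)
qed

lemma shared_missing_edges:
  assumes "(a, b) \<in> distinct_pairs n" "M \<subseteq> others n a b"
  shows "card (shared_edges a b M) = 2 * card M"
    and "card (missing_edges n a b M) = n - 2 - card M"
    and "{a, b} \<notin> shared_edges a b M" "{a, b} \<notin> missing_edges n a b M"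
    and "shared_edges a b M \<inter> missing_edges n a b M = {}"
    and "insert {a, b} (shared_edges a b M \<union> missing_edges n a b M) \<subseteq> all_edges n"
proof -
  have ab: "a < n" "b < n" "a \<noteq> b" using assms(1) by (auto simp: distinct_pairs_def)
  have M: "finite M" "a \<notin> M" "b \<notin> M" "\<forall>v\<in>M. v < n"
    using assms(2) unfolding others_def by (auto intro: finite_subset)
  have "card (shared_edges a b M) = card M + card M"
    unfolding shared_edges_def using M ab
    by (subst card_Un_disjoint) (auto simp: card_doubleton_image doubleton_eq_iff)
  then show "card (shared_edges a b M) = 2 * card M" by simp
  have "card (others n a b - M) = n - 2 - card M"
    using assms card_others[OF assms(1)] M(1) by (simp add: card_Diff_subset)
  then show "card (missing_edges n a b M) = n - 2 - card M"
    unfolding missing_edges_def by (subst card_doubleton_image) (auto simp: others_def)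
  show "{a, b} \<notin> shared_edges a b M" "{a, b} \<notin> missing_edges n a b M"
    "shared_edges a b M \<inter> missing_edges n a b M = {}"
    using M ab unfolding shared_edges_def missing_edges_def others_def
    by (auto simp: doubleton_eq_iff)
  show "insert {a, b} (shared_edges a b M \<union> missing_edges n a b M) \<subseteq> all_edges n"
    using M ab unfolding shared_edges_def missing_edges_def others_def
    by (auto simp: doubleton_in_all_edges_iff)
qed

lemma gnp_prob_dominated_adjacent:
  assumes "(a, b) \<in> distinct_pairs n" "M \<subseteq> others n a b"
  shows "gnp_prob n p (dominated_adjacent n a b M) =
    p ^ (2 * card M + 1) * (1 - p) ^ (n - 2 - card M)"
  unfolding dominated_adjacent_def using shared_missing_edges[OF assms]
  by (subst gnp_prob_edge_pattern) (auto simp: card_insert_if finite_subset[OF _ finite_all_edges])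

lemma gnp_prob_dominated_nonadjacent:
  assumes "(a, b) \<in> distinct_pairs n" "M \<subseteq> others n a b"
  shows "gnp_prob n p (dominated_nonadjacent n a b M) =
    p ^ (2 * card M) * (1 - p) ^ (n - 2 - card M + 1)"
  unfolding dominated_nonadjacent_def using shared_missing_edges[OF assms]
  by (subst gnp_prob_edge_pattern) (auto simp: card_insert_if finite_subset[OF _ finite_all_edges])

lemma sum_Pow_nonempty_card_power:
  fixes x y :: "'a :: comm_ring_1"
  assumes "finite X"
  shows "(\<Sum>M\<in>Pow X - {{}}. x ^ card M * y ^ (card X - card M)) = (x + y) ^ card X - y ^ card X"
  using sum.remove[of "Pow X" "{}" "\<lambda>M. x ^ card M * y ^ (card X - card M)"]
    sum_Pow_card_power[OF assms, of x y] assms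
  by (simp add: algebra_simps)

lemma sum_Pow_card_ge_2_power:
  fixes x y :: "'a :: comm_ring_1"
  assumes "finite X"
  shows "(\<Sum>M | M \<subseteq> X \<and> 2 \<le> card M. x ^ card M * y ^ (card X - card M)) =
    (x + y) ^ card X - y ^ card X - of_nat (card X) * x * y ^ (card X - 1)"
proof -
  let ?t = "\<lambda>M. x ^ card M * y ^ (card X - card M)"
  have split: "Pow X - {{}} = {M. M \<subseteq> X \<and> 2 \<le> card M} \<union> (\<lambda>v. {v}) ` X"
  proof -
    have "M \<in> (\<lambda>v. {v}) ` X" if "M \<subseteq> X" "M \<noteq> {}" "\<not> 2 \<le> card M" for M
    proof -
      have "0 < card M" using that(1,2) assms by (auto simp: card_gt_0_iff finite_subset)
      then have "card M = 1" using that(3) by linarith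
      then show ?thesis using that(1) by (auto simp: card_1_singleton_iff)
    qed
    then show ?thesis by auto
  qed
  have "(\<Sum>M\<in>Pow X - {{}}. ?t M) = (\<Sum>M | M \<subseteq> X \<and> 2 \<le> card M. ?t M) + (\<Sum>M\<in>(\<lambda>v. {v}) ` X. ?t M)"
    unfolding split using assms by (intro sum.union_disjoint) auto
  moreover have "(\<Sum>M\<in>(\<lambda>v. {v}) ` X. ?t M) = of_nat (card X) * x * y ^ (card X - 1)"
    by (subst sum.reindex) (auto simp: inj_on_def)
  ultimately show ?thesis using sum_Pow_nonempty_card_power[OF assms, of x y] by (simp add: algebra_simps)
qed

definition dominated_by_large_neighbourhood :: "nat \<Rightarrow> nat \<Rightarrow> nat \<Rightarrow> nat set set \<Rightarrow> bool" where
  "dominated_by_large_neighbourhood n a b E \<longleftrightarrow>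
     (\<exists>M\<in>Pow (others n a b) - {{}}. dominated_adjacent n a b M E) \<or>
     (\<exists>M\<in>{M. M \<subseteq> others n a b \<and> 2 \<le> card M}. dominated_nonadjacent n a b M E)"

lemma has_domination_pair_cases:
  assumes "has_domination_pair n E"
  shows "(\<exists>b\<in>{..<n}. edge_pattern {} (edges_at n b) E) \<or>
    (\<exists>(b, c)\<in>distinct_pairs n. edge_pattern {{b, c}} (edges_at n b - {{b, c}}) E) \<or>
    (\<exists>(a, b)\<in>distinct_pairs n. dominated_by_large_neighbourhood n a b E)"
proof -
  obtain a b where dom: "domination_pair n E a b" using assms unfolding has_domination_pair_def by blast
  then have ab: "(a, b) \<in> distinct_pairs n" "b < n" by (auto simp: domination_pair_def distinct_pairs_def)
  show ?thesis
  proof (rule domination_pair_cases[OF dom])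
    show "edge_pattern {} (edges_at n b) E \<Longrightarrow> ?thesis" using ab(2) by blast
    show "(b, c) \<in> distinct_pairs n \<Longrightarrow>
        edge_pattern {{b, c}} (edges_at n b - {{b, c}}) E \<Longrightarrow> ?thesis" for c
      by (intro disjI2 disjI1 bexI[of _ "(b, c)"]) simp_all
    have "dominated_by_large_neighbourhood n a b E \<Longrightarrow> ?thesis"
      using ab(1) by (intro disjI2 bexI[of _ "(a, b)"]) simp_all
    then show "M \<subseteq> others n a b \<Longrightarrow> M \<noteq> {} \<Longrightarrow> dominated_adjacent n a b M E \<Longrightarrow> ?thesis"
      and "M \<subseteq> others n a b \<Longrightarrow> 2 \<le> card M \<Longrightarrow> dominated_nonadjacent n a b M E \<Longrightarrow> ?thesis" for M
      unfolding dominated_by_large_neighbourhood_def by blast+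
  qed
qed

lemma gnp_prob_dominated_by_large_neighbourhood:
  assumes ab: "(a, b) \<in> distinct_pairs n" and p: "0 \<le> p" "p \<le> 1"
  shows "gnp_prob n p (dominated_by_large_neighbourhood n a b) \<le>
    (1 - p + p\<^sup>2) ^ (n - 2) - (1 - p) ^ (n - 2) - real (n - 2) * p\<^sup>2 * (1 - p) ^ (n - 2)"
proof -
  define X where "X = others n a b"
  define m where "m = n - 2"
  have X: "finite X" "card X = m" unfolding X_def m_def using card_others[OF ab] by (auto simp: others_def)
  have "gnp_prob n p (dominated_by_large_neighbourhood n a b) \<le>
      (\<Sum>M\<in>Pow X - {{}}. gnp_prob n p (dominated_adjacent n a b M)) +
      (\<Sum>M | M \<subseteq> X \<and> 2 \<le> card M. gnp_prob n p (dominated_nonadjacent n a b M))"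
    unfolding dominated_by_large_neighbourhood_def X_def[symmetric]
    by (intro order.trans[OF gnp_prob_disj_le[OF p]] add_mono gnp_prob_Bex_le[OF _ p])
      (use X in auto)
  also have "\<dots> = p * (\<Sum>M\<in>Pow X - {{}}. (p\<^sup>2) ^ card M * (1 - p) ^ (m - card M)) +
      (1 - p) * (\<Sum>M | M \<subseteq> X \<and> 2 \<le> card M. (p\<^sup>2) ^ card M * (1 - p) ^ (m - card M))"
    unfolding sum_distrib_left
    by (intro arg_cong2[where f="(+)"] sum.cong)
      (auto simp: X_def m_def gnp_prob_dominated_adjacent[OF ab] gnp_prob_dominated_nonadjacent[OF ab]
        power_mult power_add)
  also have "\<dots> = p * ((1 - p + p\<^sup>2) ^ m - (1 - p) ^ m) +
      (1 - p) * ((1 - p + p\<^sup>2) ^ m - (1 - p) ^ m - real m * p\<^sup>2 * (1 - p) ^ (m - 1))"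
    using sum_Pow_nonempty_card_power[OF X(1), of "p\<^sup>2" "1 - p"]
      sum_Pow_card_ge_2_power[OF X(1), of "p\<^sup>2" "1 - p"]
    by (simp add: X(2) add.commute)
  also have "\<dots> = (1 - p + p\<^sup>2) ^ m - (1 - p) ^ m - real m * p\<^sup>2 * (1 - p) ^ m"
    by (cases m) (simp_all add: algebra_simps)
  finally show ?thesis unfolding m_def .
qed

definition domination_bound :: "nat \<Rightarrow> real \<Rightarrow> real" where
  "domination_bound n p = real n * (1 - p) ^ (n - 1) + (real n)\<^sup>2 * (p * (1 - p) ^ (n - 2)) +
     (real n)\<^sup>2 * ((1 - p + p\<^sup>2) ^ (n - 2) - (1 - p) ^ (n - 2) - real (n - 2) * p\<^sup>2 * (1 - p) ^ (n - 2))"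

lemma card_distinct_pairs_le: "card (distinct_pairs n) \<le> n\<^sup>2" and finite_distinct_pairs: "finite (distinct_pairs n)"
proof -
  have sub: "distinct_pairs n \<subseteq> {..<n} \<times> {..<n}" unfolding distinct_pairs_def by auto
  show "finite (distinct_pairs n)" by (rule finite_subset[OF sub]) auto
  show "card (distinct_pairs n) \<le> n\<^sup>2"
    using card_mono[OF _ sub] by (simp add: power2_eq_square)
qed

lemma gnp_prob_has_domination_pair_le:
  assumes p: "0 \<le> p" "p \<le> 1" and n: "2 \<le> n"
  shows "gnp_prob n p (has_domination_pair n) \<le> domination_bound n p"
proof -
  define pendant where "pendant b c = edge_pattern {{b, c}} (edges_at n b - {{b, c}})" for b c
  define c where "c = (1 - p + p\<^sup>2) ^ (n - 2) - (1 - p) ^ (n - 2) - real (n - 2) * p\<^sup>2 * (1 - p) ^ (n - 2)"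
  have card_le: "real (card (distinct_pairs n)) * x \<le> (real n)\<^sup>2 * x" if "0 \<le> x" for x :: real
    using card_distinct_pairs_le[of n] that by (intro mult_right_mono) (simp_all flip: of_nat_power)
  have "gnp_prob n p (has_domination_pair n) \<le> gnp_prob n p (\<lambda>E.
      (\<exists>b\<in>{..<n}. edge_pattern {} (edges_at n b) E) \<or>
      (\<exists>(b, c)\<in>distinct_pairs n. pendant b c E) \<or>
      (\<exists>(a, b)\<in>distinct_pairs n. dominated_by_large_neighbourhood n a b E))"
    using has_domination_pair_cases unfolding pendant_def by (intro gnp_prob_mono[OF _ p]) blast
  also have "\<dots> \<le> (\<Sum>b<n. gnp_prob n p (edge_pattern {} (edges_at n b))) +
      ((\<Sum>(b, c)\<in>distinct_pairs n. gnp_prob n p (pendant b c)) +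
       (\<Sum>(a, b)\<in>distinct_pairs n. gnp_prob n p (dominated_by_large_neighbourhood n a b)))"
    using gnp_prob_Bex_le[OF _ p, of "{..<n}" n] gnp_prob_Bex_le[OF finite_distinct_pairs p, of n]
    by (intro order.trans[OF gnp_prob_disj_le[OF p]] add_mono order.trans[OF gnp_prob_disj_le[OF p]])
      (simp_all add: split_beta')
  also have "\<dots> \<le> real n * (1 - p) ^ (n - 1) + ((real n)\<^sup>2 * (p * (1 - p) ^ (n - 2)) + (real n)\<^sup>2 * c)"
  proof (intro add_mono)
    show "(\<Sum>b<n. gnp_prob n p (edge_pattern {} (edges_at n b))) \<le> real n * (1 - p) ^ (n - 1)"
      by (simp add: gnp_prob_isolated)
    show "(\<Sum>(b, c)\<in>distinct_pairs n. gnp_prob n p (pendant b c)) \<le> (real n)\<^sup>2 * (p * (1 - p) ^ (n - 2))"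
      using card_le[of "p * (1 - p) ^ (n - 2)"] p
      by (simp add: pendant_def gnp_prob_pendant split_beta' cong: sum.cong)
    have pair: "gnp_prob n p (dominated_by_large_neighbourhood n a b) \<le> c" if "(a, b) \<in> distinct_pairs n" for a b
      unfolding c_def by (rule gnp_prob_dominated_by_large_neighbourhood[OF that p])
    have "(0, 1) \<in> distinct_pairs n" using n by (simp add: distinct_pairs_def)
    then have "0 \<le> c" using pair[of 0 1] gnp_prob_nonneg[OF p] by (meson order.trans)
    have "(\<Sum>(a, b)\<in>distinct_pairs n. gnp_prob n p (dominated_by_large_neighbourhood n a b)) \<le>
        (\<Sum>_\<in>distinct_pairs n. c)"
      using pair by (intro sum_mono) auto
    also have "\<dots> \<le> (real n)\<^sup>2 * c" using card_le[OF \<open>0 \<le> c\<close>] by simp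
    finally show "(\<Sum>(a, b)\<in>distinct_pairs n. gnp_prob n p (dominated_by_large_neighbourhood n a b)) \<le> (real n)\<^sup>2 * c" .
  qed
  finally show ?thesis unfolding domination_bound_def c_def by simp
qed

section \<open>Estimates\<close>

lemma one_plus_power_le_exp:
  fixes y :: real
  assumes "-1 \<le> y"
  shows "(1 + y) ^ k \<le> exp (real k * y)"
proof -
  have "(1 + y) ^ k \<le> exp y ^ k"
    using assms exp_ge_add_one_self[of y] by (intro power_mono) auto
  then show ?thesis by (simp add: exp_of_nat_mult)
qed

lemma one_plus_power_minus_linear_le:
  fixes y :: real
  assumes "0 \<le> y"
  shows "(1 + y) ^ m - 1 - real m * y \<le> (real m * y)\<^sup>2 * (1 + y) ^ m"
proof (induction m)
  case 0
  then show ?case by simp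
next
  case (Suc m)
  have ge1: "1 \<le> (1 + y) ^ Suc m" using assms by (intro one_le_power) simp
  have "(1 + y) ^ Suc m - 1 - real (Suc m) * y = (1 + y) * ((1 + y) ^ m - 1 - real m * y) + real m * y\<^sup>2"
    by (simp add: algebra_simps power2_eq_square)
  also have "\<dots> \<le> (1 + y) * ((real m * y)\<^sup>2 * (1 + y) ^ m) + (2 * real m + 1) * y\<^sup>2 * (1 + y) ^ Suc m"
  proof (intro add_mono mult_left_mono)
    have "real m * y\<^sup>2 \<le> (2 * real m + 1) * y\<^sup>2" by (intro mult_right_mono) auto
    also have "\<dots> \<le> (2 * real m + 1) * y\<^sup>2 * (1 + y) ^ Suc m"
      using mult_left_mono[OF ge1, of "(2 * real m + 1) * y\<^sup>2"] by simp
    finally show "real m * y\<^sup>2 \<le> (2 * real m + 1) * y\<^sup>2 * (1 + y) ^ Suc m" .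
  qed (use Suc assms in auto)
  also have "\<dots> = (real (Suc m) * y)\<^sup>2 * (1 + y) ^ Suc m"
    by (simp add: algebra_simps power2_eq_square)
  finally show ?case .
qed

lemma domination_term_le:
  fixes p :: real
  assumes p: "0 < p" "p \<le> 1/2" and small: "2 * real m * p\<^sup>2 \<le> 1"
  shows "(1 - p + p\<^sup>2) ^ m - (1 - p) ^ m - real m * p\<^sup>2 * (1 - p) ^ m \<le>
    (1 - p) ^ m * (12 * (real m * p\<^sup>2)\<^sup>2 + 2 * real m * p ^ 3)"
proof -
  define y where "y = p\<^sup>2 / (1 - p)"
  have y: "0 \<le> y" "y \<le> 2 * p\<^sup>2" using p unfolding y_def by (auto simp: field_simps)
  have my: "0 \<le> real m * y" "real m * y \<le> 2 * real m * p\<^sup>2"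
    using y mult_left_mono[OF y(2), of "real m"] by (simp_all add: ac_simps)
  have "(1 + y) ^ m \<le> exp (real m * y)" using y by (intro one_plus_power_le_exp) simp
  also have "\<dots> \<le> exp 1" using my small by simp
  finally have pow_le: "(1 + y) ^ m \<le> 3" using exp_le by linarith
  have "(1 + y) ^ m - 1 - real m * y \<le> (real m * y)\<^sup>2 * 3"
    using one_plus_power_minus_linear_le[OF y(1), of m] mult_left_mono[OF pow_le, of "(real m * y)\<^sup>2"]
    by simp
  also have "\<dots> \<le> 12 * (real m * p\<^sup>2)\<^sup>2"
  proof -
    have "(2 * real m * p\<^sup>2)\<^sup>2 = 4 * (real m * p\<^sup>2)\<^sup>2" by (simp add: power_mult_distrib)
    then show ?thesis using power_mono[OF my(2) my(1), of 2] by linarith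
  qed
  finally have quadratic: "(1 + y) ^ m - 1 - real m * y \<le> 12 * (real m * p\<^sup>2)\<^sup>2" .
  have linear: "real m * y * p \<le> 2 * real m * p ^ 3"
    using mult_right_mono[OF my(2), of p] p by (simp add: power2_eq_square power3_eq_cube)
  have base: "1 - p + p\<^sup>2 = (1 - p) * (1 + y)" and p2: "p\<^sup>2 = (1 - p) * y"
    using p unfolding y_def by (auto simp: field_simps)
  have "real m * p\<^sup>2 * (1 - p) ^ m = (1 - p) ^ m * (real m * y * (1 - p))"
    unfolding p2 by (simp add: ac_simps)
  then have "(1 - p + p\<^sup>2) ^ m - (1 - p) ^ m - real m * p\<^sup>2 * (1 - p) ^ m =
      (1 - p) ^ m * (1 + y) ^ m - (1 - p) ^ m - (1 - p) ^ m * (real m * y * (1 - p))"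
    by (simp only: base power_mult_distrib)
  also have "\<dots> = (1 - p) ^ m * (((1 + y) ^ m - 1 - real m * y) + real m * y * p)"
    by (simp add: algebra_simps)
  also have "\<dots> \<le> (1 - p) ^ m * (12 * (real m * p\<^sup>2)\<^sup>2 + 2 * real m * p ^ 3)"
    using p quadratic linear by (intro mult_left_mono add_mono) auto
  finally show ?thesis .
qed

lemma domination_bound_dense:
  assumes n: "3 \<le> n" and p: "0 < p" "p \<le> 1/2" and dense: "6 * ln n \<le> n * p"
  shows "domination_bound n p \<le> 9 / n"
proof -
  define N where "N = real n"
  define m where "m = n - 2"
  define Q where "Q = (1 - p + p\<^sup>2) ^ m"
  have N: "3 \<le> N" "real m = N - 2" using n unfolding N_def m_def by auto
  have R_le: "(1 - p) ^ m \<le> Q" using p unfolding Q_def by (intro power_mono) auto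
  then have pR: "p * (1 - p) ^ m \<le> Q" "(1 - p) ^ m \<le> Q"
    using p by (auto intro: order.trans[OF mult_left_le_one_le])
  have "(1 - p) ^ (n - 1) \<le> (1 - p) ^ m" using p n unfolding m_def by (intro power_decreasing) auto
  then have isolated: "(1 - p) ^ (n - 1) \<le> Q" using pR by linarith
  have "0 \<le> (1 - p) ^ m" "0 \<le> real m * p\<^sup>2 * (1 - p) ^ m" using p by auto
  then have dominated: "Q - (1 - p) ^ m - real m * p\<^sup>2 * (1 - p) ^ m \<le> Q" by linarith
  have "domination_bound n p \<le> N * Q + N\<^sup>2 * Q + N\<^sup>2 * Q"
    unfolding domination_bound_def N_def[symmetric] m_def[symmetric] Q_def[symmetric]
    using isolated pR dominated N by (intro add_mono mult_left_mono) auto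
  also have "\<dots> \<le> 3 * N\<^sup>2 * Q"
  proof -
    have "0 \<le> Q" using p R_le order.trans[OF zero_le_power[of "1 - p" m]] by auto
    then show ?thesis using N mult_right_mono[of N "N\<^sup>2" Q] by (simp add: power2_eq_square)
  qed
  also have "Q \<le> 3 / N ^ 3"
  proof -
    have "p * p \<le> p * (1/2)" using p by (intro mult_left_mono) auto
    then have "1 - p + p\<^sup>2 \<le> 1 - p / 2" "0 \<le> 1 - p + p\<^sup>2"
      unfolding power2_eq_square using p mult_nonneg_nonneg[of p p] by linarith+
    then have "Q \<le> (1 - p / 2) ^ m" unfolding Q_def by (rule power_mono)
    also have "\<dots> \<le> exp (real m * (- p / 2))" using one_plus_power_le_exp[of "- p / 2" m] p by simp
    also have "\<dots> \<le> exp (1 - 3 * ln N)" using dense p unfolding N(2) N_def by (simp add: algebra_simps)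
    also have "\<dots> = exp 1 / N ^ 3"
      using exp_of_nat_mult[of 3 "ln N"] N by (simp add: exp_diff)
    also have "\<dots> \<le> 3 / N ^ 3" using N exp_le by (intro divide_right_mono) auto
    finally show ?thesis .
  qed
  then have "3 * N\<^sup>2 * Q \<le> 3 * N\<^sup>2 * (3 / N ^ 3)" by (intro mult_left_mono) auto
  also have "\<dots> = 9 / N" using N by (simp add: field_simps power2_eq_square power3_eq_cube)
  finally show ?thesis unfolding N_def .
qed

lemma power_one_minus_le_threshold:
  fixes p w :: real
  assumes n: "3 \<le> n" "1 \<le> ln n" and p: "0 < p" "p \<le> 1/2"
    and threshold: "ln n + ln (ln n) + w \<le> n * p"
  shows "(1 - p) ^ (n - 2) \<le> 3 * exp (- w) / (n * ln n)"
proof -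
  define N where "N = real n"
  define L where "L = ln N"
  have N: "3 \<le> N" "1 \<le> L" using n unfolding N_def L_def by auto
  have "(1 - p) ^ (n - 2) \<le> exp (real (n - 2) * (- p))"
    using one_plus_power_le_exp[of "- p" "n - 2"] p by simp
  also have "\<dots> \<le> exp 1 * exp (- (L + ln L + w))"
    using n threshold p unfolding N_def L_def by (simp add: left_diff_distrib flip: exp_add)
  also have "exp (- (L + ln L + w)) = exp (- w) / (exp L * exp (ln L))"
    by (simp add: exp_diff[symmetric] exp_add[symmetric] algebra_simps)
  also have "\<dots> = exp (- w) / (N * L)" using N unfolding L_def by simp
  also have "exp 1 * (exp (- w) / (N * L)) \<le> 3 * (exp (- w) / (N * L))"
    using N exp_le by (intro mult_right_mono) auto
  finally show ?thesis unfolding N_def L_def by simp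
qed

lemma domination_term_sparse_le:
  fixes p :: real
  assumes n: "3 \<le> n" and p: "0 < p" "p \<le> 1/2"
    and large: "1 \<le> ln n" "72 * (ln n)\<^sup>2 \<le> n" and sparse: "n * p \<le> 6 * ln n"
    and R: "(1 - p) ^ (n - 2) \<le> 3 / (n * ln n)"
  shows "(real n)\<^sup>2 * ((1 - p + p\<^sup>2) ^ (n - 2) - (1 - p) ^ (n - 2) - real (n - 2) * p\<^sup>2 * (1 - p) ^ (n - 2))
    \<le> 47952 * ln n ^ 3 / n"
proof -
  define N where "N = real n"
  define L where "L = ln N"
  define X where "X = N * p"
  define m where "m = n - 2"
  have N: "3 \<le> N" "real m = N - 2" using n unfolding N_def m_def by auto
  have L: "1 \<le> L" "72 * L\<^sup>2 \<le> N" using large unfolding L_def N_def by auto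
  have X: "X \<le> 6 * L" "0 \<le> X" using sparse p N unfolding X_def L_def N_def by auto
  have R: "0 \<le> (1 - p) ^ m" "(1 - p) ^ m \<le> 3 / (N * L)"
    using R p unfolding m_def N_def L_def by auto
  have mp2: "0 \<le> real m * p\<^sup>2" "N * (real m * p\<^sup>2) \<le> X\<^sup>2"
    using N p mult_right_mono[of "real m" N "N * p\<^sup>2"]
    by (auto simp: X_def power2_eq_square ac_simps)
  have mp3: "N\<^sup>2 * (real m * p ^ 3) \<le> X ^ 3"
    using N p mult_right_mono[of "real m" N "N\<^sup>2 * p ^ 3"]
    by (auto simp: X_def power3_eq_cube power2_eq_square ac_simps)
  have small: "2 * real m * p\<^sup>2 \<le> 1"
  proof -
    have "X\<^sup>2 \<le> (6 * L)\<^sup>2" using X by (intro power_mono) auto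
    then have "N * (2 * real m * p\<^sup>2) \<le> N * 1" using mp2 L by (simp add: power_mult_distrib)
    then show ?thesis using N by simp
  qed
  have "N\<^sup>2 * ((1 - p + p\<^sup>2) ^ m - (1 - p) ^ m - real m * p\<^sup>2 * (1 - p) ^ m) \<le>
      N\<^sup>2 * ((1 - p) ^ m * (12 * (real m * p\<^sup>2)\<^sup>2 + 2 * real m * p ^ 3))"
    using domination_term_le[OF p small] by (intro mult_left_mono) auto
  also have "\<dots> = (1 - p) ^ m * (12 * (N * (real m * p\<^sup>2))\<^sup>2 + 2 * (N\<^sup>2 * (real m * p ^ 3)))"
    by (simp add: algebra_simps power_mult_distrib)
  also have "\<dots> \<le> (1 - p) ^ m * (12 * (X\<^sup>2)\<^sup>2 + 2 * X ^ 3)"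
    using R mp2 mp3 N by (intro mult_left_mono add_mono power_mono) auto
  also have "\<dots> \<le> 3 / (N * L) * (12 * ((6 * L)\<^sup>2)\<^sup>2 + 2 * (6 * L) ^ 3)"
    using R X L N by (intro mult_mono add_mono power_mono) auto
  also have "\<dots> = (46656 * L ^ 3 + 1296 * L\<^sup>2) / N"
    using N L by (simp add: field_simps power2_eq_square power3_eq_cube)
  also have "\<dots> \<le> 47952 * L ^ 3 / N"
    using N L power_increasing[of 2 3 L] by (intro divide_right_mono) auto
  finally show ?thesis unfolding N_def L_def m_def .
qed

lemma domination_bound_sparse:
  assumes n: "3 \<le> n" and p: "0 < p" "p \<le> 1/2"
    and large: "1 \<le> ln n" "72 * (ln n)\<^sup>2 \<le> n"
    and w: "0 \<le> w" "ln n + ln (ln n) + w \<le> n * p" and sparse: "n * p \<le> 6 * ln n"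
  shows "domination_bound n p \<le> 21 * exp (- w) + 48000 * ln n ^ 3 / n"
proof -
  define N where "N = real n"
  define L where "L = ln N"
  define R where "R = (1 - p) ^ (n - 2)"
  have N: "3 \<le> N" "1 \<le> L" using n large unfolding N_def L_def by auto
  have R_exp: "R \<le> 3 * exp (- w) / (N * L)"
    using power_one_minus_le_threshold[OF n(1) large(1) p w(2)] unfolding R_def N_def L_def .
  also have "\<dots> \<le> 3 / (N * L)" using w N by (intro divide_right_mono) auto
  finally have dominated: "N\<^sup>2 * ((1 - p + p\<^sup>2) ^ (n - 2) - R - real (n - 2) * p\<^sup>2 * R) \<le> 47952 * L ^ 3 / N"
    using domination_term_sparse_le[OF n p large sparse] unfolding R_def N_def L_def by blast
  have isolated: "N * (1 - p) ^ (n - 1) \<le> 3 * exp (- w)"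
  proof -
    have "(1 - p) ^ (n - 1) \<le> R" unfolding R_def using p by (intro power_decreasing) auto
    then have "N * (1 - p) ^ (n - 1) \<le> N * (3 * exp (- w) / (N * L))"
      using R_exp N by (intro mult_left_mono) auto
    also have "\<dots> \<le> 3 * exp (- w)" using N by (simp add: field_simps)
    finally show ?thesis .
  qed
  have pendant: "N\<^sup>2 * (p * R) \<le> 18 * exp (- w)"
  proof -
    have "N\<^sup>2 * (p * R) = N * ((N * p) * R)" by (simp add: power2_eq_square)
    also have "\<dots> \<le> N * (6 * L * (3 * exp (- w) / (N * L)))"
    proof -
      have "N * p \<le> 6 * L" using sparse unfolding N_def L_def .
      then show ?thesis using p N R_exp by (intro mult_left_mono mult_mono[OF _ R_exp]) (auto simp: R_def)
    qed
    also have "\<dots> = 18 * exp (- w)" using N by simp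
    finally show ?thesis .
  qed
  have "domination_bound n p \<le> 3 * exp (- w) + 18 * exp (- w) + 47952 * L ^ 3 / N"
    using isolated pendant dominated
    unfolding domination_bound_def N_def[symmetric] R_def[symmetric] by linarith
  also have "\<dots> \<le> 21 * exp (- w) + 48000 * L ^ 3 / N"
    using N by (simp add: divide_right_mono)
  finally show ?thesis unfolding L_def N_def .
qed

lemma gnp_prob_has_domination_pair_bound:
  fixes p w1 w2 :: real
  defines "w \<equiv> min w1 w2"
  assumes n: "3 \<le> n" and large: "1 \<le> ln n" "72 * (ln n)\<^sup>2 \<le> n" and w: "0 \<le> w"
    and p: "(ln n + ln (ln n) + w1) / n < p" "p < 1 - (ln n + ln (ln n) + w2) / n"
  shows "0 \<le> gnp_prob n p (has_domination_pair n)"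
    and "gnp_prob n p (has_domination_pair n) \<le> 21 * exp (- w) + 48000 * ln n ^ 3 / n + 9 / n"
proof -
  define c where "c = (ln n + ln (ln n) + w) / n"
  define q where "q = min p (1 - p)"
  have "c \<le> (ln n + ln (ln n) + w1) / n" "c \<le> (ln n + ln (ln n) + w2) / n"
    unfolding c_def w_def by (intro divide_right_mono add_left_mono; simp)+
  moreover have "0 \<le> c" using large w n unfolding c_def by auto
  ultimately have "0 < q" "q \<le> 1/2" "c \<le> q" using p unfolding q_def min_def by auto
  moreover have "ln n + ln (ln n) + w = n * c" using n unfolding c_def by simp
  ultimately have q: "0 < q" "q \<le> 1/2" "ln n + ln (ln n) + w \<le> n * q"
    by (auto intro: mult_left_mono)
  then show "0 \<le> gnp_prob n p (has_domination_pair n)"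
    unfolding q_def by (intro gnp_prob_nonneg) auto
  have "gnp_prob n p (has_domination_pair n) = gnp_prob n q (has_domination_pair n)"
    using gnp_prob_one_minus[of n "has_domination_pair n" p, OF has_domination_pair_complement]
    unfolding q_def by (cases "p \<le> 1 - p") (simp_all add: min_def)
  also have "\<dots> \<le> domination_bound n q"
    using q n by (intro gnp_prob_has_domination_pair_le) auto
  also have "\<dots> \<le> 21 * exp (- w) + 48000 * ln n ^ 3 / n + 9 / n"
  proof (cases "6 * ln n \<le> n * q")
    case True
    have "0 \<le> 48000 * ln n ^ 3 / n" using large by simp
    then show ?thesis using domination_bound_dense[OF n q(1,2) True] exp_ge_zero[of "- w"] by linarith
  next
    case False
    have "0 \<le> 9 / real n" by simp
    then show ?thesis using domination_bound_sparse[OF n q(1,2) large w q(3)] False by linarith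
  qed
  finally show "gnp_prob n p (has_domination_pair n) \<le> 21 * exp (- w) + 48000 * ln n ^ 3 / n + 9 / n" .
qed

lemma domination_error_tendsto_zero:
  assumes "filterlim w at_top sequentially"
  shows "(\<lambda>n. 21 * exp (- w n) + 48000 * ln (real n) ^ 3 / real n + 9 / real n) \<longlonglongrightarrow> 0"
proof -
  have "(\<lambda>n. exp (- w n)) \<longlonglongrightarrow> 0"
    using assms by (intro filterlim_compose[OF exp_at_bot] filterlim_compose[OF filterlim_uminus_at_bot_at_top])
  moreover have "(\<lambda>n. 48000 * ln (real n) ^ 3 / real n) \<longlonglongrightarrow> 0" "(\<lambda>n. 9 / real n) \<longlonglongrightarrow> 0"
    by real_asymp+
  ultimately show ?thesis by (intro tendsto_add_zero tendsto_mult_right_zero)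
qed

theorem theorem2p13:
  fixes \<omega>1 \<omega>2 p :: "nat \<Rightarrow> real"
  assumes "filterlim \<omega>1 at_top sequentially"
    and "filterlim \<omega>2 at_top sequentially"
    and "eventually (\<lambda>n. (ln n + ln (ln n) + \<omega>1 n) / n < p n \<and>
                          p n < 1 - (ln n + ln (ln n) + \<omega>2 n) / n) sequentially"
  shows "(\<lambda>n. gnp_prob n (p n) (\<lambda>E. \<not> has_domination_pair n E)) \<longlonglongrightarrow> 1"
proof -
  define w where "w n = min (\<omega>1 n) (\<omega>2 n)" for n
  define B where "B n = 21 * exp (- w n) + 48000 * ln (real n) ^ 3 / real n + 9 / real n" for n
  have w: "filterlim w at_top sequentially"
    using assms(1,2) unfolding filterlim_at_top w_def by (simp add: eventually_conj_iff)
  have "eventually (\<lambda>n. 1 \<le> ln (real n)) sequentially"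
    and "eventually (\<lambda>n. 72 * (ln (real n))\<^sup>2 \<le> real n) sequentially"
    by real_asymp+
  then have bound: "eventually (\<lambda>n. 0 \<le> gnp_prob n (p n) (has_domination_pair n) \<and>
      gnp_prob n (p n) (has_domination_pair n) \<le> B n) sequentially"
    using assms(3) eventually_ge_at_top[of 3] w[unfolded filterlim_at_top, rule_format, of 0]
    by eventually_elim (use gnp_prob_has_domination_pair_bound in \<open>auto simp: B_def w_def\<close>)
  have B: "B \<longlonglongrightarrow> 0" unfolding B_def[abs_def] by (rule domination_error_tendsto_zero[OF w])
  have "(\<lambda>n. gnp_prob n (p n) (has_domination_pair n)) \<longlonglongrightarrow> 0"
    by (rule tendsto_sandwich[OF eventually_mono[OF bound] eventually_mono[OF bound] tendsto_const B])
      simp_all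
  then show ?thesis unfolding gnp_prob_not using tendsto_diff[OF tendsto_const[of 1]] by fastforce
qed

end
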